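(* Let $\mathcal{G}$ be a finite connected undirected simple graph with vertices $1,\dots,N$ and let $Z,Z'\in\mathbf{Z}^N$. Then $\Phi_h(K,\mathcal{G},Z)=\Phi_h(K,\mathcal{G},Z')$ for every integer $K\ge 2$ and every $K$-harmonic function $h$ on $\mathcal{G}$ if and only if there exists an integer vector $U\in\mathbf{Z}^N$ with $Z'=Z+\nabla^2 U$. Consequently a map $\eta:\mathbf{Z}^N\to\mathbf{Z}^N$ is isoinvariant if and only if for every $Z$ one has $\eta(Z)=Z+\nabla^2U$ for some $U\in\mathbf{Z}^N$ (depending on $Z$).
   Context: $d_i$ is the degree of vertex $i$; the Laplacian $\nabla^2$ is the $N\times N$ integer matrix with $\nabla^2_{ii}=d_i$, $\nabla^2_{ij}=-1$ if $i\sim j$ (adjacent), $0$ otherwise. $\mathbf{Z}_K=\{0,\dots,K-1\}$. A function $h:\{1,\dots,N\}\to\mathbf{Z}_K$ is $K$-harmonic if $(\nabla^2 h)(i)\equiv 0\pmod K$ for all $i$. For a configuration $Z=(z(1),\dots,z(N))\in\mathbf{Z}^N$, $\Phi_h(K,\mathcal{G},Z)=\left(\sum_i h(i)z(i)\right)\bmod K$. A map $\eta:\mathbf{Z}^N\to\mathbf{Z}^N$ is called isoinvariant if $\Phi_h(K,\mathcal{G},\eta(Z))=\Phi_h(K,\mathcal{G},Z)$ for all $Z$, all integers $K\ge2$ and all $K$-harmonic $h$. *)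

theory Defs
  imports Main
begin

definition simple_graph :: "nat \<Rightarrow> (nat \<Rightarrow> nat \<Rightarrow> bool) \<Rightarrow> bool" where
  "simple_graph N E \<longleftrightarrow>
     (\<forall>i j. E i j \<longrightarrow> i \<in> {1..N} \<and> j \<in> {1..N}) \<and>
     (\<forall>i j. E i j \<longrightarrow> E j i) \<and> (\<forall>i. \<not> E i i)"

definition connected_graph :: "nat \<Rightarrow> (nat \<Rightarrow> nat \<Rightarrow> bool) \<Rightarrow> bool" where
  "connected_graph N E \<longleftrightarrow> (\<forall>i\<in>{1..N}. \<forall>j\<in>{1..N}. E\<^sup>*\<^sup>* i j)"

definition degree :: "nat \<Rightarrow> (nat \<Rightarrow> nat \<Rightarrow> bool) \<Rightarrow> nat \<Rightarrow> nat" where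
  "degree N E i = card {j \<in> {1..N}. E i j}"

definition laplacian :: "nat \<Rightarrow> (nat \<Rightarrow> nat \<Rightarrow> bool) \<Rightarrow> (nat \<Rightarrow> int) \<Rightarrow> nat \<Rightarrow> int" where
  "laplacian N E U i = int (degree N E i) * U i - (\<Sum>j\<in>{j \<in> {1..N}. E i j}. U j)"

definition K_harmonic :: "nat \<Rightarrow> (nat \<Rightarrow> nat \<Rightarrow> bool) \<Rightarrow> int \<Rightarrow> (nat \<Rightarrow> int) \<Rightarrow> bool" where
  "K_harmonic N E K h \<longleftrightarrow>
     (\<forall>i\<in>{1..N}. 0 \<le> h i \<and> h i < K) \<and>
     (\<forall>i\<in>{1..N}. laplacian N E h i mod K = 0)"

definition Phi :: "nat \<Rightarrow> (nat \<Rightarrow> int) \<Rightarrow> int \<Rightarrow> (nat \<Rightarrow> int) \<Rightarrow> int" where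
  "Phi N h K Z = (\<Sum>i=1..N. h i * Z i) mod K"

definition isoinvariant :: "nat \<Rightarrow> (nat \<Rightarrow> nat \<Rightarrow> bool) \<Rightarrow> ((nat \<Rightarrow> int) \<Rightarrow> (nat \<Rightarrow> int)) \<Rightarrow> bool" where
  "isoinvariant N E \<eta> \<longleftrightarrow>
     (\<forall>Z K h. K \<ge> 2 \<longrightarrow> K_harmonic N E K h \<longrightarrow> Phi N h K (\<eta> Z) = Phi N h K Z)"

end

theory Submission
  imports Defs "Jordan_Normal_Form.Determinant" "HOL-Number_Theory.Cong"
begin

text \<open>Symmetry of the Laplacian makes \<open>\<Phi>\<^sub>h\<close> invariant under \<open>Z \<mapsto> Z + \<nabla>\<^sup>2U\<close> whenever
\<open>\<nabla>\<^sup>2h \<equiv> 0 (mod K)\<close>. Conversely let \<open>d = Z' - Z\<close>. Testing \<open>h = 1\<close> with \<open>K = |\<Sigma>d| + 2\<close> gives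
\<open>\<Sigma>d = 0\<close>. Deleting the last vertex leaves the reduced Laplacian \<open>L\<close>, which is nonsingular
by the maximum principle on a connected graph. With \<open>D = det L\<close>, every row of \<open>adj L\<close>,
extended by 0, is a function \<open>h\<close> with \<open>\<nabla>\<^sup>2h \<equiv> 0 (mod D)\<close>, so \<open>D\<close> divides \<open>(adj L) d\<close> and
\<open>U = (adj L) d / D\<close> solves \<open>\<nabla>\<^sup>2U = d\<close>; the last coordinate comes for free from \<open>\<Sigma>d = 0\<close>.\<close>

definition one_based_mat :: "nat \<Rightarrow> (nat \<Rightarrow> nat \<Rightarrow> 'a) \<Rightarrow> 'a mat" where
  "one_based_mat n a = mat n n (\<lambda>(i, j). a (Suc i) (Suc j))"

definition adjugate :: "nat \<Rightarrow> (nat \<Rightarrow> nat \<Rightarrow> 'a :: comm_ring_1) \<Rightarrow> nat \<Rightarrow> nat \<Rightarrow> 'a" where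
  "adjugate n a i j = adj_mat (one_based_mat n a) $$ (i - 1, j - 1)"

lemma sum_atLeast1_atMost_eq_lessThan: "(\<Sum>k=1..n. f k) = (\<Sum>k<n. f (Suc k))"
  using sum.atLeast1_atMost_eq[of f n] by simp

lemma one_based_mat_carrier: "one_based_mat n a \<in> carrier_mat n n"
  by (simp add: one_based_mat_def)

lemma one_based_mat_adjugate: "one_based_mat n (adjugate n a) = adj_mat (one_based_mat n a)"
proof -
  have "adj_mat (one_based_mat n a) \<in> carrier_mat n n"
    by (rule adj_mat(1)[OF one_based_mat_carrier])
  then show ?thesis
    by (intro eq_matI) (auto simp: one_based_mat_def adjugate_def)
qed

lemma one_based_mat_mult_index:
  assumes "i \<in> {1..n}" "j \<in> {1..n}"
  shows "(one_based_mat n a * one_based_mat n b) $$ (i - 1, j - 1) = (\<Sum>k=1..n. a i k * b k j)"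
  using assms unfolding sum_atLeast1_atMost_eq_lessThan
  by (auto simp: one_based_mat_def scalar_prod_def atLeast0LessThan intro!: sum.cong)

lemma sum_adjugate_mult:
  assumes "i \<in> {1..n}" "j \<in> {1..n}"
  shows "(\<Sum>k=1..n. adjugate n a i k * a k j) = (if i = j then det (one_based_mat n a) else 0)"
proof -
  have "(\<Sum>k=1..n. adjugate n a i k * a k j) = (adj_mat (one_based_mat n a) * one_based_mat n a) $$ (i - 1, j - 1)"
    using one_based_mat_mult_index[OF assms, of "adjugate n a" a] by (simp add: one_based_mat_adjugate)
  also have "\<dots> = (det (one_based_mat n a) \<cdot>\<^sub>m 1\<^sub>m n) $$ (i - 1, j - 1)"
    by (simp add: adj_mat(3)[OF one_based_mat_carrier])
  finally show ?thesis using assms by auto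
qed

lemma sum_mult_adjugate:
  assumes "i \<in> {1..n}" "j \<in> {1..n}"
  shows "(\<Sum>k=1..n. a i k * adjugate n a k j) = (if i = j then det (one_based_mat n a) else 0)"
proof -
  have "(\<Sum>k=1..n. a i k * adjugate n a k j) = (one_based_mat n a * adj_mat (one_based_mat n a)) $$ (i - 1, j - 1)"
    using one_based_mat_mult_index[OF assms, of a "adjugate n a"] by (simp add: one_based_mat_adjugate)
  also have "\<dots> = (det (one_based_mat n a) \<cdot>\<^sub>m 1\<^sub>m n) $$ (i - 1, j - 1)"
    by (simp add: adj_mat(2)[OF one_based_mat_carrier])
  finally show ?thesis using assms by auto
qed

lemma det_one_based_mat_eq_0_imp_kernel:
  fixes a :: "nat \<Rightarrow> nat \<Rightarrow> 'a :: idom"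
  assumes "det (one_based_mat n a) = 0"
  obtains v where "\<exists>i\<in>{1..n}. v i \<noteq> 0" "\<forall>i\<in>{1..n}. (\<Sum>k=1..n. a i k * v k) = 0"
proof -
  obtain w where w: "w \<in> carrier_vec n" "w \<noteq> 0\<^sub>v n" "one_based_mat n a *\<^sub>v w = 0\<^sub>v n"
    using assms det_0_iff_vec_prod_zero[OF one_based_mat_carrier] by auto
  define v where "v i = w $ (i - 1)" for i
  obtain i0 where "i0 < n" "w $ i0 \<noteq> 0"
    using w(1,2) by (metis eq_vecI carrier_vecD index_zero_vec)
  then have "\<exists>i\<in>{1..n}. v i \<noteq> 0"
    by (intro bexI[of _ "Suc i0"]) (auto simp: v_def)
  moreover have "(\<Sum>k=1..n. a i k * v k) = 0" if "i \<in> {1..n}" for i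
  proof -
    have "(\<Sum>k=1..n. a i k * v k) = (one_based_mat n a *\<^sub>v w) $ (i - 1)"
      using that w(1) unfolding sum_atLeast1_atMost_eq_lessThan
      by (auto simp: one_based_mat_def v_def scalar_prod_def atLeast0LessThan intro!: sum.cong)
    then show ?thesis using w(3) that by auto
  qed
  ultimately show ?thesis using that by blast
qed

lemma int_linear_system_solvable_if_dvd:
  fixes a :: "nat \<Rightarrow> nat \<Rightarrow> int"
  assumes det: "det (one_based_mat n a) \<noteq> 0"
    and dvd: "\<And>K y. K \<ge> 2 \<Longrightarrow> \<forall>j\<in>{1..n}. K dvd (\<Sum>i=1..n. y i * a i j) \<Longrightarrow>
                K dvd (\<Sum>i=1..n. y i * d i)"
  obtains x where "\<forall>i\<in>{1..n}. (\<Sum>k=1..n. a i k * x k) = d i"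
proof -
  define D where "D = det (one_based_mat n a)"
  define w where "w i = (\<Sum>k=1..n. adjugate n a i k * d k)" for i
  have D_dvd_w: "D dvd w i" if i: "i \<in> {1..n}" for i
  proof (cases "\<bar>D\<bar> \<ge> 2")
    case True
    have "\<bar>D\<bar> dvd (\<Sum>k=1..n. adjugate n a i k * a k j)" if "j \<in> {1..n}" for j
      using sum_adjugate_mult[OF i that, of a] unfolding D_def by simp
    then show ?thesis using dvd[OF True] unfolding w_def by simp
  next
    case False
    then have "\<bar>D\<bar> = 1" using det unfolding D_def by linarith
    then show ?thesis by (metis abs_dvd_iff one_dvd)
  qed
  define x where "x i = w i div D" for i
  have "(\<Sum>k=1..n. a i k * x k) = d i" if i: "i \<in> {1..n}" for i
  proof -
    have "D * (\<Sum>k=1..n. a i k * x k) = (\<Sum>k=1..n. a i k * w k)"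
      unfolding sum_distrib_left using D_dvd_w by (intro sum.cong) (auto simp: x_def)
    also have "\<dots> = (\<Sum>l=1..n. (\<Sum>k=1..n. a i k * adjugate n a k l) * d l)"
      unfolding w_def sum_distrib_left sum_distrib_right
      by (subst sum.swap) (simp add: mult_ac)
    also have "\<dots> = (\<Sum>l=1..n. if l = i then D * d i else 0)"
      using sum_mult_adjugate[OF i, where a = a] by (intro sum.cong) (auto simp: D_def)
    also have "\<dots> = D * d i"
      using i by simp
    finally show ?thesis using det unfolding D_def by simp
  qed
  then show ?thesis using that by blast
qed

definition laplacian_coeff :: "nat \<Rightarrow> (nat \<Rightarrow> nat \<Rightarrow> bool) \<Rightarrow> nat \<Rightarrow> nat \<Rightarrow> int" where
  "laplacian_coeff N E i j = (if i = j then int (Defs.degree N E i) else if E i j then -1 else 0)"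

lemma laplacian_eq_sum_coeff:
  assumes sg: "simple_graph N E" and i: "i \<in> {1..N}"
  shows "laplacian N E U i = (\<Sum>j=1..N. laplacian_coeff N E i j * U j)"
proof -
  have "\<not> E i i" using sg unfolding simple_graph_def by auto
  then have "(\<Sum>j=1..N. laplacian_coeff N E i j * U j)
      = (\<Sum>j=1..N. (if j = i then int (Defs.degree N E i) * U i else 0) + (if E i j then - U j else 0))"
    by (intro sum.cong) (auto simp: laplacian_coeff_def)
  also have "\<dots> = int (Defs.degree N E i) * U i + (\<Sum>j=1..N. if E i j then - U j else 0)"
    using i by (simp add: sum.distrib)
  also have "(\<Sum>j=1..N. if E i j then - U j else 0) = (\<Sum>j\<in>{j \<in> {1..N}. E i j}. - U j)"
    using sum.inter_filter[of "{1..N}" "\<lambda>j. - U j" "E i"] by simp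
  finally show ?thesis unfolding laplacian_def by (simp add: sum_negf)
qed

lemma laplacian_coeff_sym: "simple_graph N E \<Longrightarrow> laplacian_coeff N E i j = laplacian_coeff N E j i"
  unfolding simple_graph_def laplacian_coeff_def by auto

lemma laplacian_const [simp]: "laplacian N E (\<lambda>_. c) i = 0"
  unfolding laplacian_def Defs.degree_def by simp

lemma sum_mult_laplacian_commute:
  assumes sg: "simple_graph N E"
  shows "(\<Sum>i=1..N. h i * laplacian N E U i) = (\<Sum>i=1..N. U i * laplacian N E h i)"
proof -
  have "(\<Sum>i=1..N. h i * laplacian N E U i) = (\<Sum>i=1..N. \<Sum>j=1..N. h i * (laplacian_coeff N E i j * U j))"
    by (simp add: laplacian_eq_sum_coeff[OF sg] sum_distrib_left)
  also have "\<dots> = (\<Sum>j=1..N. \<Sum>i=1..N. U j * (laplacian_coeff N E j i * h i))"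
    by (subst sum.swap) (simp add: laplacian_coeff_sym[OF sg] mult_ac)
  also have "\<dots> = (\<Sum>j=1..N. U j * laplacian N E h j)"
    by (simp add: laplacian_eq_sum_coeff[OF sg] sum_distrib_left)
  finally show ?thesis .
qed

lemma sum_laplacian_eq_0: "simple_graph N E \<Longrightarrow> (\<Sum>i=1..N. laplacian N E U i) = 0"
  using sum_mult_laplacian_commute[of N E "\<lambda>_. 1" U] by simp

lemma harmonic_imp_constant:
  assumes sg: "simple_graph N E" and conn: "connected_graph N E"
    and harmonic: "\<forall>i\<in>{1..N}. laplacian N E V i = 0"
    and i: "i \<in> {1..N}" and j: "j \<in> {1..N}"
  shows "V i = V j"
proof -
  define M where "M = Max (V ` {1..N})"
  have fin: "finite (V ` {1..N})" "V ` {1..N} \<noteq> {}" using i by auto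
  obtain i0 where i0: "i0 \<in> {1..N}" "V i0 = M" using Max_in[OF fin] unfolding M_def by auto
  have le_M: "V k \<le> M" if "k \<in> {1..N}" for k using Max_ge[OF fin(1)] that unfolding M_def by auto
  \<comment> \<open>at a maximum, \<open>\<nabla>\<^sup>2V\<close> is a sum of nonnegative terms \<open>M - V z\<close> over the neighbours \<open>z\<close>\<close>
  have max_spreads: "V z = M" if y: "y \<in> {1..N}" "V y = M" and "E y z" for y z
  proof -
    let ?S = "{k \<in> {1..N}. E y k}"
    have "(\<Sum>k\<in>?S. M - V k) = laplacian N E V y"
      unfolding laplacian_def Defs.degree_def using y by (simp add: sum_subtractf)
    also have "\<dots> = 0" using harmonic y by auto
    finally have "\<forall>k\<in>?S. M - V k = 0" using le_M by (subst sum_nonneg_eq_0_iff[symmetric]) auto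
    moreover have "z \<in> ?S" using sg \<open>E y z\<close> unfolding simple_graph_def by auto
    ultimately show ?thesis by auto
  qed
  have "V k = M \<and> k \<in> {1..N}" if "E\<^sup>*\<^sup>* i0 k" for k
    using that
  proof (induction rule: rtranclp_induct)
    case base then show ?case using i0 by auto
  next
    case (step y z)
    then show ?case using max_spreads[of y z] sg unfolding simple_graph_def by auto
  qed
  then have "V k = M" if "k \<in> {1..N}" for k
    using conn i0(1) that unfolding connected_graph_def by blast
  then show ?thesis using i j by simp
qed

lemma laplacian_last_vertex:
  "simple_graph (Suc n) E \<Longrightarrow> laplacian (Suc n) E V (Suc n) = - (\<Sum>i=1..n. laplacian (Suc n) E V i)"
  using sum_laplacian_eq_0[of "Suc n" E V] by simp

lemma laplacian_vanishing_at_last_vertex: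
  assumes "simple_graph (Suc n) E" and "V (Suc n) = 0" and "i \<in> {1..Suc n}"
  shows "laplacian (Suc n) E V i = (\<Sum>k=1..n. laplacian_coeff (Suc n) E i k * V k)"
  using laplacian_eq_sum_coeff[OF assms(1,3), of V] assms(2) by simp

lemma det_reduced_laplacian_ne_0:
  assumes sg: "simple_graph (Suc n) E" and conn: "connected_graph (Suc n) E"
  shows "det (one_based_mat n (laplacian_coeff (Suc n) E)) \<noteq> 0"
proof
  assume "det (one_based_mat n (laplacian_coeff (Suc n) E)) = 0"
  then obtain v where v_ne_0: "\<exists>i\<in>{1..n}. v i \<noteq> 0"
    and v_kernel: "\<forall>i\<in>{1..n}. (\<Sum>k=1..n. laplacian_coeff (Suc n) E i k * v k) = 0"
    by (rule det_one_based_mat_eq_0_imp_kernel)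
  define V where "V k = (if k \<le> n then v k else 0)" for k
  have V_last: "V (Suc n) = 0" unfolding V_def by simp
  have harmonic_below: "laplacian (Suc n) E V i = 0" if "i \<in> {1..n}" for i
  proof -
    have "laplacian (Suc n) E V i = (\<Sum>k=1..n. laplacian_coeff (Suc n) E i k * v k)"
      using laplacian_vanishing_at_last_vertex[of n E V, OF sg V_last] that by (simp add: V_def)
    then show ?thesis using v_kernel that by simp
  qed
  then have "laplacian (Suc n) E V (Suc n) = 0" by (simp add: laplacian_last_vertex[OF sg])
  with harmonic_below have "\<forall>i\<in>{1..Suc n}. laplacian (Suc n) E V i = 0"
    by (auto simp: le_Suc_eq)
  then have "V i = V (Suc n)" if "i \<in> {1..n}" for i
    using harmonic_imp_constant[OF sg conn] that by simp
  then show False using v_ne_0 V_last unfolding V_def by force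
qed

lemma sum_eq_0_if_dvd_pairing:
  assumes "\<And>K h. K \<ge> 2 \<Longrightarrow> \<forall>i\<in>{1..N}. K dvd laplacian N E h i \<Longrightarrow> K dvd (\<Sum>i=1..N. h i * d i)"
  shows "(\<Sum>i=1..N. d i) = 0"
proof (rule ccontr)
  assume ne_0: "(\<Sum>i=1..N. d i) \<noteq> 0"
  have "(\<bar>\<Sum>i=1..N. d i\<bar> + 2) dvd (\<Sum>i=1..N. d i)"
    using assms[of "\<bar>\<Sum>i=1..N. d i\<bar> + 2" "\<lambda>_. 1"] by simp
  with dvd_imp_le_int[OF ne_0] show False by fastforce
qed

lemma laplacian_solvable_if_dvd_pairing:
  assumes sg: "simple_graph N E" and conn: "connected_graph N E"
    and dvd: "\<And>K h. K \<ge> 2 \<Longrightarrow> \<forall>i\<in>{1..N}. K dvd laplacian N E h i \<Longrightarrow> K dvd (\<Sum>i=1..N. h i * d i)"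
  shows "\<exists>U. \<forall>i\<in>{1..N}. laplacian N E U i = d i"
proof (cases N)
  case 0
  then show ?thesis by simp
next
  case (Suc n)
  let ?L = "laplacian_coeff N E"
  have reduced_dvd: "K dvd (\<Sum>i=1..n. y i * d i)"
    if K: "K \<ge> 2" and y: "\<forall>j\<in>{1..n}. K dvd (\<Sum>i=1..n. y i * ?L i j)" for K y
  proof -
    define h where "h k = (if k \<le> n then y k else 0)" for k
    have h_last: "h N = 0" unfolding h_def Suc by simp
    have below: "K dvd laplacian N E h j" if "j \<in> {1..n}" for j
    proof -
      have "laplacian N E h j = (\<Sum>i=1..n. ?L j i * y i)"
        using laplacian_vanishing_at_last_vertex[of n E h j] sg h_last that Suc
        by (auto simp: h_def intro!: sum.cong)
      also have "\<dots> = (\<Sum>i=1..n. y i * ?L i j)"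
        by (simp add: laplacian_coeff_sym[OF sg, of j] mult.commute)
      finally show ?thesis using y that by simp
    qed
    then have "K dvd (\<Sum>i=1..n. laplacian N E h i)" by (intro dvd_sum) auto
    then have "K dvd laplacian N E h N" using laplacian_last_vertex[of n E h] sg Suc by simp
    with below have "\<forall>j\<in>{1..N}. K dvd laplacian N E h j" using Suc by (auto simp: le_Suc_eq)
    then have "K dvd (\<Sum>i=1..N. h i * d i)" using dvd[OF K] by blast
    then show ?thesis using h_last Suc by (simp add: h_def)
  qed
  obtain x where x: "\<forall>i\<in>{1..n}. (\<Sum>k=1..n. ?L i k * x k) = d i"
    using int_linear_system_solvable_if_dvd[OF det_reduced_laplacian_ne_0 reduced_dvd] sg conn Suc
    by blast
  define U where "U k = (if k \<le> n then x k else 0)" for k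
  have U_last: "U N = 0" unfolding U_def Suc by simp
  have below: "laplacian N E U i = d i" if "i \<in> {1..n}" for i
    using laplacian_vanishing_at_last_vertex[of n E U i] sg U_last that Suc x
    by (auto simp: U_def)
  have "laplacian N E U N = - (\<Sum>i=1..n. d i)"
    using laplacian_last_vertex[of n E U] sg below Suc by simp
  also have "\<dots> = d N"
    using sum_eq_0_if_dvd_pairing[of N E d] dvd Suc by simp
  finally have "\<forall>i\<in>{1..N}. laplacian N E U i = d i" using below Suc by (auto simp: le_Suc_eq)
  then show ?thesis by blast
qed

lemma K_harmonic_mod:
  assumes sg: "simple_graph N E" and K: "K > 0"
    and dvd: "\<forall>i\<in>{1..N}. K dvd laplacian N E h i"
  shows "K_harmonic N E K (\<lambda>i. h i mod K)"
proof -
  have "[laplacian N E (\<lambda>j. h j mod K) i = laplacian N E h i] (mod K)" if i: "i \<in> {1..N}" for i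
    unfolding laplacian_eq_sum_coeff[OF sg i]
    by (intro cong_sum cong_scalar_left) (simp add: cong_def)
  then show ?thesis
    using dvd K unfolding K_harmonic_def cong_def by (auto simp: dvd_eq_mod_eq_0)
qed

lemma Phi_mod: "Phi N (\<lambda>i. h i mod K) K Z = (\<Sum>i=1..N. h i * Z i) mod K"
proof -
  have "[(\<Sum>i=1..N. (h i mod K) * Z i) = (\<Sum>i=1..N. h i * Z i)] (mod K)"
    by (intro cong_sum cong_scalar_right) (simp add: cong_def)
  then show ?thesis unfolding Phi_def cong_def .
qed

lemma Phi_eq_if_laplacian_shift:
  assumes sg: "simple_graph N E" and h: "K_harmonic N E K h"
    and shift: "\<forall>i\<in>{1..N}. Z' i = Z i + laplacian N E U i"
  shows "Phi N h K Z = Phi N h K Z'"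
proof -
  have "(\<Sum>i=1..N. h i * Z' i) = (\<Sum>i=1..N. h i * Z i) + (\<Sum>i=1..N. h i * laplacian N E U i)"
    using shift by (simp add: sum.distrib[symmetric] distrib_left)
  also have "(\<Sum>i=1..N. h i * laplacian N E U i) = (\<Sum>i=1..N. U i * laplacian N E h i)"
    by (rule sum_mult_laplacian_commute[OF sg])
  finally have "(\<Sum>i=1..N. h i * Z' i) = (\<Sum>i=1..N. h i * Z i) + (\<Sum>i=1..N. U i * laplacian N E h i)" .
  moreover have "\<forall>i\<in>{1..N}. K dvd laplacian N E h i"
    using h unfolding K_harmonic_def by (simp add: dvd_eq_mod_eq_0)
  then have "K dvd (\<Sum>i=1..N. U i * laplacian N E h i)" by (intro dvd_sum) auto
  ultimately show ?thesis unfolding Phi_def by (simp add: mod_add_right_eq[symmetric])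
qed

lemma laplacian_shift_if_Phi_eq:
  assumes sg: "simple_graph N E" and conn: "connected_graph N E"
    and Phi_eq: "\<forall>K h. K \<ge> 2 \<longrightarrow> K_harmonic N E K h \<longrightarrow> Phi N h K Z = Phi N h K Z'"
  shows "\<exists>U. \<forall>i\<in>{1..N}. Z' i = Z i + laplacian N E U i"
proof -
  have dvd_pairing: "K dvd (\<Sum>i=1..N. h i * (Z' i - Z i))"
    if K: "K \<ge> 2" and dvd: "\<forall>i\<in>{1..N}. K dvd laplacian N E h i" for K h
  proof -
    have "Phi N (\<lambda>i. h i mod K) K Z = Phi N (\<lambda>i. h i mod K) K Z'"
      using Phi_eq K K_harmonic_mod[OF sg _ dvd] by simp
    then have "[(\<Sum>i=1..N. h i * Z' i) = (\<Sum>i=1..N. h i * Z i)] (mod K)"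
      unfolding Phi_mod cong_def by simp
    then show ?thesis
      by (simp add: cong_iff_dvd_diff sum_subtractf right_diff_distrib)
  qed
  then obtain U where "\<forall>i\<in>{1..N}. laplacian N E U i = Z' i - Z i"
    using laplacian_solvable_if_dvd_pairing[OF sg conn dvd_pairing] by blast
  then have "\<forall>i\<in>{1..N}. Z' i = Z i + laplacian N E U i" by simp
  then show ?thesis by blast
qed

theorem theorem2:
  fixes N :: nat and E :: "nat \<Rightarrow> nat \<Rightarrow> bool"
  assumes "simple_graph N E" and "connected_graph N E"
  shows "(\<forall>Z Z' :: nat \<Rightarrow> int.
            (\<forall>K h. K \<ge> 2 \<longrightarrow> K_harmonic N E K h \<longrightarrow> Phi N h K Z = Phi N h K Z')
            \<longleftrightarrow> (\<exists>U :: nat \<Rightarrow> int. \<forall>i\<in>{1..N}. Z' i = Z i + laplacian N E U i))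
       \<and> (\<forall>\<eta>. isoinvariant N E \<eta> \<longleftrightarrow>
            (\<forall>Z. \<exists>U :: nat \<Rightarrow> int. \<forall>i\<in>{1..N}. \<eta> Z i = Z i + laplacian N E U i))"
proof -
  have Phi_invariant_iff:
    "(\<forall>K h. K \<ge> 2 \<longrightarrow> K_harmonic N E K h \<longrightarrow> Phi N h K Z = Phi N h K Z')
       \<longleftrightarrow> (\<exists>U. \<forall>i\<in>{1..N}. Z' i = Z i + laplacian N E U i)" for Z Z'
    using laplacian_shift_if_Phi_eq[OF assms] Phi_eq_if_laplacian_shift[OF assms(1)] by blast
  moreover have "isoinvariant N E \<eta> \<longleftrightarrow>
      (\<forall>Z. \<exists>U. \<forall>i\<in>{1..N}. \<eta> Z i = Z i + laplacian N E U i)" for \<eta>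
    unfolding isoinvariant_def using Phi_invariant_iff[of _ "\<eta> _"] by (metis (no_types, lifting))
  ultimately show ?thesis by blast
qed

end
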